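(* For every matrix $A\in\mathbb{R}^{m\times n}$ and every $\epsilon>0$ there exists $t_0$ such that for every perturbed fictitious play system $(U,V)$ for $A$, $$\max V(t)-\min U(t)\le\epsilon t\quad\text{for all } t\ge t_0.$$
   Context: An iterative play system $(U,V)$ for $A\in\mathbb{R}^{m\times n}$ is a pair of sequences $U(0),U(1),\dots\in\mathbb{R}^n$ and $V(0),V(1),\dots\in\mathbb{R}^m$ such that $\min U(0)=\max V(0)$ and, for each $t$, $U(t+1)=U(t)+A_{i(t),*}$ and $V(t+1)=V(t)+A_{*,j(t)}$ for some indices $i(t)\in\{1,\dots,m\}$, $j(t)\in\{1,\dots,n\}$, where $A_{i,*}$ is the $i$th row and $A_{*,j}$ the $j$th column of $A$; $\max$, $\min$ of a vector denote its largest/smallest entry. Let $a=\max_{i,j}|A_{i,j}|$. A perturbed fictitious play system (PFP-system) is an iterative play system for which there exist vectors $E_V(t)\in\mathbb{R}^m$, $E_U(t)\in\mathbb{R}^n$ with $\|E_V(t)\|_\infty<a$ and $\|E_U(t)\|_\infty<a$ for each $t$, such that $i(t+1)\in\arg\max[V(t)+E_V(t)]$ and $j(t+1)\in\arg\min[U(t)+E_U(t)]$ for each $t$. *)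

theory Defs
  imports "HOL-Analysis.Analysis"
begin

text \<open>Vectors in R^k are modelled as real^'k for a finite index type 'k;
  an m x n matrix is real^'n^'m (rows indexed by 'm, columns by 'n).\<close>

definition vmax :: "real^'k \<Rightarrow> real" where
  "vmax x = Max (range (\<lambda>k. x $ k))"

definition vmin :: "real^'k \<Rightarrow> real" where
  "vmin x = Min (range (\<lambda>k. x $ k))"

definition mabs :: "real^'n^'m \<Rightarrow> real" where
  "mabs A = Max (range (\<lambda>(i, j). \<bar>A $ i $ j\<bar>))"

definition iterative_play_with ::
  "real^'n^'m \<Rightarrow> (nat \<Rightarrow> real^'n) \<Rightarrow> (nat \<Rightarrow> real^'m) \<Rightarrow> (nat \<Rightarrow> 'm) \<Rightarrow> (nat \<Rightarrow> 'n) \<Rightarrow> bool" where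
  "iterative_play_with A U V i j \<longleftrightarrow>
     vmin (U 0) = vmax (V 0) \<and>
     (\<forall>t. U (Suc t) = U t + row (i t) A \<and> V (Suc t) = V t + column (j t) A)"

definition iterative_play_system :: "real^'n^'m \<Rightarrow> (nat \<Rightarrow> real^'n) \<Rightarrow> (nat \<Rightarrow> real^'m) \<Rightarrow> bool" where
  "iterative_play_system A U V \<longleftrightarrow> (\<exists>i j. iterative_play_with A U V i j)"

definition PFP_system :: "real^'n^'m \<Rightarrow> (nat \<Rightarrow> real^'n) \<Rightarrow> (nat \<Rightarrow> real^'m) \<Rightarrow> bool" where
  "PFP_system A U V \<longleftrightarrow>
     (\<exists>i j EV EU. iterative_play_with A U V i j \<and>
        (\<forall>t. (\<forall>k. \<bar>EV t $ k\<bar> < mabs A) \<and> (\<forall>k. \<bar>EU t $ k\<bar> < mabs A) \<and>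
             (\<forall>k. (V t + EV t) $ k \<le> (V t + EV t) $ i (Suc t)) \<and>
             (\<forall>k. (U t + EU t) $ j (Suc t) \<le> (U t + EU t) $ k)))"

end

theory Submission
  imports Defs
begin

text \<open>Robinson's induction over submatrices. For a \<open>\<delta>\<close>-approximate play confined to a submatrix
  \<open>R \<times> C\<close>, cut time into windows of a fixed length \<open>T\<close> and look at the gap
  \<open>max\<^sub>R V - min\<^sub>C U\<close>. If every row of \<open>R\<close> and every column of \<open>C\<close> is chosen within a window,
  each of them was nearly optimal at some moment of it, so at the end of the window the entries of
  \<open>V\<close> on \<open>R\<close> (and of \<open>U\<close> on \<open>C\<close>) differ by at most \<open>\<delta> + 2a(T + 1)\<close>; as the total
  increment of \<open>V\<close> along the chosen rows equals that of \<open>U\<close> along the chosen columns, this bounds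
  the gap by its initial value plus a constant. Otherwise the window is a play of a proper
  submatrix, on which by induction the gap grows at rate \<open>\<epsilon>/4\<close> once \<open>T\<close> is large, and returning
  to \<open>R \<times> C\<close> costs only a constant. So the gap grows by at most \<open>\<epsilon>T/2\<close> per window, up to a
  bounded term. A PFP-system is a \<open>2a\<close>-approximate play of the whole matrix with initial gap 0.\<close>

definition near_argmax :: "real \<Rightarrow> 'a set \<Rightarrow> ('a \<Rightarrow> real) \<Rightarrow> 'a \<Rightarrow> bool" where
  "near_argmax \<delta> R f k \<longleftrightarrow> k \<in> R \<and> (\<forall>x\<in>R. f x \<le> f k + \<delta>)"

lemma near_argmax_perturb:
  assumes "near_argmax \<delta> R f k" and "\<And>x. x \<in> R \<Longrightarrow> \<bar>g x - f x\<bar> \<le> e"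
  shows "near_argmax (\<delta> + 2 * e) R g k"
  using assms unfolding near_argmax_def by (smt (verit, best))

lemma near_argmax_subset:
  "near_argmax \<delta> R f k \<Longrightarrow> k \<in> R' \<Longrightarrow> R' \<subseteq> R \<Longrightarrow> near_argmax \<delta> R' f k"
  unfolding near_argmax_def by blast

lemma Max_le_near_argmax:
  "finite R \<Longrightarrow> near_argmax \<delta> R f k \<Longrightarrow> (MAX x\<in>R. f x) \<le> f k + \<delta>"
  unfolding near_argmax_def by (subst Max_le_iff) auto

lemma near_argmax_mono: "near_argmax \<delta> R f k \<Longrightarrow> \<delta> \<le> \<delta>' \<Longrightarrow> near_argmax \<delta>' R f k"
  unfolding near_argmax_def by force

lemma Min_ge_near_argmax_uminus:
  "finite C \<Longrightarrow> near_argmax \<delta> C (\<lambda>x. - f x) l \<Longrightarrow> f l - \<delta> \<le> (MIN x\<in>C. f x)"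
  unfolding near_argmax_def by (subst Min_ge_iff) auto

lemma Max_le_Min_add:
  assumes "finite R" "R \<noteq> {}" "\<And>x y. x \<in> R \<Longrightarrow> y \<in> R \<Longrightarrow> f x \<le> f y + e"
  shows "(MAX x\<in>R. f x) \<le> (MIN x\<in>R. f x) + e"
proof -
  have "(MAX x\<in>R. f x) \<in> f ` R" "(MIN x\<in>R. f x) \<in> f ` R"
    using assms(1,2) by (intro Max_in Min_in; simp)+
  then show ?thesis using assms(3) by auto
qed

lemma abs_diff_le_steps:
  fixes f :: "nat \<Rightarrow> real"
  assumes "\<And>t. t < N \<Longrightarrow> \<bar>f (Suc t) - f t\<bar> \<le> a" and "s + d \<le> N"
  shows "\<bar>f (s + d) - f s\<bar> \<le> a * d"
  using assms(2)
proof (induction d)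
  case (Suc d)
  then have "\<bar>f (Suc (s + d)) - f (s + d)\<bar> \<le> a" using assms(1) by simp
  with Suc show ?case by (simp add: algebra_simps)
qed simp

lemma bounded_by_window_recurrence:
  fixes g :: "nat \<Rightarrow> real" and \<rho> :: real
  assumes "0 < T" "0 \<le> \<rho>"
    and "\<And>s. s \<le> N \<Longrightarrow> s \<le> T \<Longrightarrow> g s \<le> B"
    and "\<And>s. s \<le> N \<Longrightarrow> T < s \<Longrightarrow> g s \<le> B \<or> g s \<le> g (s - T) + \<rho> * T"
  shows "s \<le> N \<Longrightarrow> g s \<le> B + \<rho> * s"
proof (induction s rule: less_induct)
  case (less s)
  show ?case
  proof (cases "s \<le> T")
    case True
    then show ?thesis using assms(2,3) less.prems by (simp add: add_increasing2)
  next
    case False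
    have "g (s - T) \<le> B + \<rho> * real (s - T)"
      by (rule less.IH) (use False assms(1) less.prems in auto)
    moreover have "\<rho> * real (s - T) + \<rho> * T = \<rho> * s"
      using False by (simp add: of_nat_diff algebra_simps)
    moreover have "0 \<le> \<rho> * s" using assms(2) by simp
    ultimately show ?thesis using assms(4)[of s] False less.prems by linarith
  qed
qed

definition approx_play ::
  "('m \<Rightarrow> 'n \<Rightarrow> real) \<Rightarrow> real \<Rightarrow> 'm set \<Rightarrow> 'n set \<Rightarrow> (nat \<Rightarrow> 'n \<Rightarrow> real) \<Rightarrow> (nat \<Rightarrow> 'm \<Rightarrow> real)
     \<Rightarrow> (nat \<Rightarrow> 'm) \<Rightarrow> (nat \<Rightarrow> 'n) \<Rightarrow> nat \<Rightarrow> bool" where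
  "approx_play A \<delta> R C U V i j N \<longleftrightarrow> i 0 \<in> R \<and> j 0 \<in> C \<and>
     (\<forall>t<N. (\<forall>l. U (Suc t) l = U t l + A (i t) l) \<and> (\<forall>k. V (Suc t) k = V t k + A k (j t)) \<and>
        near_argmax \<delta> R (V t) (i (Suc t)) \<and> near_argmax \<delta> C (\<lambda>l. - U t l) (j (Suc t)))"

lemma approx_play_mem:
  assumes "approx_play A \<delta> R C U V i j N" and "t \<le> N"
  shows "i t \<in> R" and "j t \<in> C"
  using assms by (cases t; auto simp: approx_play_def near_argmax_def)+

lemma approx_play_horizon_mono:
  "approx_play A \<delta> R C U V i j N \<Longrightarrow> M \<le> N \<Longrightarrow> approx_play A \<delta> R C U V i j M"
  unfolding approx_play_def by auto

lemma approx_play_drift: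
  assumes play: "approx_play A \<delta> R C U V i j N" and A: "\<And>k l. \<bar>A k l\<bar> \<le> a"
    and "s + d \<le> N"
  shows "\<bar>V (s + d) k - V s k\<bar> \<le> a * d" and "\<bar>U (s + d) l - U s l\<bar> \<le> a * d"
proof -
  have "\<bar>V (Suc t) k - V t k\<bar> \<le> a" "\<bar>U (Suc t) l - U t l\<bar> \<le> a" if "t < N" for t
    using play that A unfolding approx_play_def by auto
  then show "\<bar>V (s + d) k - V s k\<bar> \<le> a * d" "\<bar>U (s + d) l - U s l\<bar> \<le> a * d"
    using abs_diff_le_steps[of N "\<lambda>t. V t k"] abs_diff_le_steps[of N "\<lambda>t. U t l"] \<open>s + d \<le> N\<close>
    by auto
qed

lemma approx_play_choice_near_optimal:
  assumes play: "approx_play A \<delta> R C U V i j N" and A: "\<And>k l. \<bar>A k l\<bar> \<le> a"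
    and "p < s" "s \<le> N"
  shows "near_argmax (\<delta> + 2 * a * (s - p)) R (V s) (i (Suc p))"
    and "near_argmax (\<delta> + 2 * a * (s - p)) C (\<lambda>l. - U s l) (j (Suc p))"
proof -
  have choice: "near_argmax \<delta> R (V p) (i (Suc p))" "near_argmax \<delta> C (\<lambda>l. - U p l) (j (Suc p))"
    using play \<open>p < s\<close> \<open>s \<le> N\<close> unfolding approx_play_def by auto
  have "p + (s - p) \<le> N" "p + (s - p) = s" using \<open>p < s\<close> \<open>s \<le> N\<close> by auto
  then have "\<bar>V s k - V p k\<bar> \<le> a * (s - p)" "\<bar>- U s l - - U p l\<bar> \<le> a * (s - p)" for k l
    using approx_play_drift[OF play A, of p "s - p"] by (auto simp: abs_minus_commute)
  then show "near_argmax (\<delta> + 2 * a * (s - p)) R (V s) (i (Suc p))"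
    and "near_argmax (\<delta> + 2 * a * (s - p)) C (\<lambda>l. - U s l) (j (Suc p))"
    using near_argmax_perturb[OF choice(1)] near_argmax_perturb[OF choice(2)] by (simp_all add: mult.assoc)
qed

lemma approx_play_window:
  assumes play: "approx_play A \<delta> R C U V i j N" and "s + T \<le> N"
    and "R' \<subseteq> R" "C' \<subseteq> C" "i ` {s..s + T} \<subseteq> R'" "j ` {s..s + T} \<subseteq> C'"
  shows "approx_play A \<delta> R' C' (\<lambda>t. U (s + t)) (\<lambda>t. V (s + t)) (\<lambda>t. i (s + t)) (\<lambda>t. j (s + t)) T"
proof -
  have mem: "i (s + t) \<in> R'" "j (s + t) \<in> C'" if "t \<le> T" for t
    using that assms(5,6) by auto
  have "(\<forall>l. U (s + Suc t) l = U (s + t) l + A (i (s + t)) l) \<and>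
      (\<forall>k. V (s + Suc t) k = V (s + t) k + A k (j (s + t))) \<and>
      near_argmax \<delta> R' (V (s + t)) (i (s + Suc t)) \<and>
      near_argmax \<delta> C' (\<lambda>l. - U (s + t) l) (j (s + Suc t))" if "t < T" for t
  proof -
    have "s + t < N" using that assms(2) by simp
    then show ?thesis
      using play mem[of "Suc t"] that assms(3,4) unfolding approx_play_def
      by (metis add_Suc_right near_argmax_subset Suc_leI)
  qed
  then show ?thesis using mem[of 0] unfolding approx_play_def by simp
qed

lemma approx_play_increments_balanced:
  fixes A :: "'m::finite \<Rightarrow> 'n::finite \<Rightarrow> real"
  assumes play: "approx_play A \<delta> R C U V i j N"
  shows "(MIN k\<in>R. V N k) - (MAX k\<in>R. V 0 k) \<le> (MAX l\<in>C. U N l) - (MIN l\<in>C. U 0 l)"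
proof (cases "N = 0")
  case True
  have "(MIN k\<in>R. V 0 k) \<le> V 0 (i 0)" "V 0 (i 0) \<le> (MAX k\<in>R. V 0 k)"
    and "(MIN l\<in>C. U 0 l) \<le> U 0 (j 0)" "U 0 (j 0) \<le> (MAX l\<in>C. U 0 l)"
    using approx_play_mem[OF play, of 0] by auto
  then show ?thesis using True by simp
next
  case False
  have step: "V (Suc t) k = V t k + A k (j t)" "U (Suc t) l = U t l + A (i t) l" if "t < N" for t k l
    using play that unfolding approx_play_def by blast+
  have sums: "V t k = V 0 k + (\<Sum>s<t. A k (j s))" "U t l = U 0 l + (\<Sum>s<t. A (i s) l)"
    if "t \<le> N" for t k l
    using that by (induction t) (simp_all add: step)
  \<comment> \<open>Both sides of the identity equal the sum of all \<open>A (i s) (j s')\<close> with \<open>s, s' < N\<close>.\<close>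
  have "(\<Sum>s<N. V N (i s) - V 0 (i s)) = (\<Sum>s'<N. U N (j s') - U 0 (j s'))"
    by (simp add: sums[OF order_refl] sum.swap[of "\<lambda>s s'. A (i s) (j s')"])
  moreover have "(\<Sum>s<N. (MIN k\<in>R. V N k) - (MAX k\<in>R. V 0 k)) \<le> (\<Sum>s<N. V N (i s) - V 0 (i s))"
    using approx_play_mem(1)[OF play] by (intro sum_mono diff_mono) auto
  moreover have "(\<Sum>s'<N. U N (j s') - U 0 (j s')) \<le> (\<Sum>s'<N. (MAX l\<in>C. U N l) - (MIN l\<in>C. U 0 l))"
    using approx_play_mem(2)[OF play] by (intro sum_mono diff_mono) auto
  ultimately have "real N * ((MIN k\<in>R. V N k) - (MAX k\<in>R. V 0 k))
      \<le> real N * ((MAX l\<in>C. U N l) - (MIN l\<in>C. U 0 l))"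
    by simp
  then show ?thesis using False by simp
qed

definition gap :: "'m set \<Rightarrow> 'n set \<Rightarrow> (nat \<Rightarrow> 'n \<Rightarrow> real) \<Rightarrow> (nat \<Rightarrow> 'm \<Rightarrow> real) \<Rightarrow> nat \<Rightarrow> real" where
  "gap R C U V t = (MAX k\<in>R. V t k) - (MIN l\<in>C. U t l)"

lemma gap_antimono:
  fixes R R' :: "'m::finite set" and C C' :: "'n::finite set"
  assumes "R' \<subseteq> R" "C' \<subseteq> C" "R' \<noteq> {}" "C' \<noteq> {}"
  shows "gap R' C' U V t \<le> gap R C U V t"
  unfolding gap_def using assms by (intro diff_mono Max_mono Min_antimono) auto

lemma gap_drift:
  fixes A :: "'m::finite \<Rightarrow> 'n::finite \<Rightarrow> real"
  assumes play: "approx_play A \<delta> R C U V i j N" and A: "\<And>k l. \<bar>A k l\<bar> \<le> a" and "s \<le> N"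
  shows "gap R C U V s \<le> gap R C U V 0 + 2 * a * s"
proof -
  have "R \<noteq> {}" "C \<noteq> {}" using approx_play_mem[OF play, of 0] by auto
  have drift: "V s k \<le> V 0 k + a * s" "U 0 l - a * s \<le> U s l" for k l
    using approx_play_drift(1)[OF play A, where s = 0 and d = s and k = k]
      approx_play_drift(2)[OF play A, where s = 0 and d = s and l = l] \<open>s \<le> N\<close>
    by (auto simp: abs_le_iff)
  have "V s k \<le> (MAX k\<in>R. V 0 k) + a * s" if "k \<in> R" for k
    using that by (intro order_trans[OF drift(1)] add_right_mono) simp
  moreover have "(MIN l\<in>C. U 0 l) - a * s \<le> U s l" if "l \<in> C" for l
    using that by (intro order_trans[OF _ drift(2)] diff_right_mono) simp
  ultimately have "(MAX k\<in>R. V s k) \<le> (MAX k\<in>R. V 0 k) + a * s"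
    and "(MIN l\<in>C. U 0 l) - a * s \<le> (MIN l\<in>C. U s l)"
    using \<open>R \<noteq> {}\<close> \<open>C \<noteq> {}\<close> by (simp_all add: Max_le_iff Min_ge_iff)
  then show ?thesis unfolding gap_def by simp
qed

lemma gap_le_subgame_gap:
  fixes A :: "'m::finite \<Rightarrow> 'n::finite \<Rightarrow> real"
  assumes play: "approx_play A \<delta> R C U V i j N" and A: "\<And>k l. \<bar>A k l\<bar> \<le> a"
    and "t < N" "i (Suc t) \<in> R'" "j (Suc t) \<in> C'"
  shows "gap R C U V (Suc t) \<le> gap R' C' U V (Suc t) + 2 * (\<delta> + 2 * a)"
proof -
  have "near_argmax (\<delta> + 2 * a) R (V (Suc t)) (i (Suc t))"
    and "near_argmax (\<delta> + 2 * a) C (\<lambda>l. - U (Suc t) l) (j (Suc t))"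
    using approx_play_choice_near_optimal[OF play A, of t "Suc t"] \<open>t < N\<close> by auto
  then have "(MAX k\<in>R. V (Suc t) k) \<le> V (Suc t) (i (Suc t)) + (\<delta> + 2 * a)"
    and "U (Suc t) (j (Suc t)) - (\<delta> + 2 * a) \<le> (MIN l\<in>C. U (Suc t) l)"
    by (simp_all add: Max_le_near_argmax Min_ge_near_argmax_uminus)
  moreover have "V (Suc t) (i (Suc t)) \<le> (MAX k\<in>R'. V (Suc t) k)"
    and "(MIN l\<in>C'. U (Suc t) l) \<le> U (Suc t) (j (Suc t))"
    using assms(4,5) by simp_all
  ultimately show ?thesis unfolding gap_def by simp
qed

lemma gap_le_if_all_chosen:
  fixes A :: "'m::finite \<Rightarrow> 'n::finite \<Rightarrow> real"
  assumes play: "approx_play A \<delta> R C U V i j N" and A: "\<And>k l. \<bar>A k l\<bar> \<le> a"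
    and "T < s" "s \<le> N" "R \<subseteq> i ` {s - T..s}" "C \<subseteq> j ` {s - T..s}"
  shows "gap R C U V s \<le> gap R C U V 0 + 2 * (\<delta> + 2 * a * (T + 1))"
proof -
  define e where "e = \<delta> + 2 * a * (T + 1)"
  have "0 \<le> a" using A by (meson abs_ge_zero order_trans)
  have chosen: "near_argmax e R (V s) (i s') \<and> near_argmax e C (\<lambda>l. - U s l) (j s')"
    if window: "s' \<in> {s - T..s}" for s'
  proof -
    obtain p where p: "s' = Suc p" using window \<open>T < s\<close> by (cases s') auto
    have "p < s" "real (s - p) \<le> T + 1" using window p by auto
    then have "\<delta> + 2 * a * (s - p) \<le> e"
      unfolding e_def using \<open>0 \<le> a\<close> by (simp add: mult_left_mono)
    with approx_play_choice_near_optimal[OF play A \<open>p < s\<close> \<open>s \<le> N\<close>] show ?thesis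
      unfolding p by (blast intro: near_argmax_mono)
  qed
  have near_V: "near_argmax e R (V s) k" if "k \<in> R" for k
    using chosen assms(5) that by blast
  have near_U: "near_argmax e C (\<lambda>l. - U s l) l" if "l \<in> C" for l
    using chosen assms(6) that by blast
  have "R \<noteq> {}" "C \<noteq> {}" using approx_play_mem[OF play, of 0] by auto
  then have "(MAX k\<in>R. V s k) \<le> (MIN k\<in>R. V s k) + e" "(MAX l\<in>C. U s l) \<le> (MIN l\<in>C. U s l) + e"
    using near_V near_U unfolding near_argmax_def by (intro Max_le_Min_add; force)+
  moreover have "(MIN k\<in>R. V s k) - (MAX k\<in>R. V 0 k) \<le> (MAX l\<in>C. U s l) - (MIN l\<in>C. U 0 l)"
    using approx_play_increments_balanced[OF approx_play_horizon_mono[OF play \<open>s \<le> N\<close>]] .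
  ultimately show ?thesis unfolding gap_def e_def by simp
qed

definition gap_growth_le :: "('m \<Rightarrow> 'n \<Rightarrow> real) \<Rightarrow> real \<Rightarrow> 'm set \<Rightarrow> 'n set \<Rightarrow> real \<Rightarrow> nat \<Rightarrow> bool" where
  "gap_growth_le A \<delta> R C \<epsilon> N \<longleftrightarrow>
     (\<forall>U V i j. approx_play A \<delta> R C U V i j N \<longrightarrow> gap R C U V N \<le> gap R C U V 0 + \<epsilon> * N)"

lemma gap_window_step:
  fixes A :: "'m::finite \<Rightarrow> 'n::finite \<Rightarrow> real"
  assumes play: "approx_play A \<delta> R C U V i j N" and A: "\<And>k l. \<bar>A k l\<bar> \<le> a"
    and "T < s" "s \<le> N"
    and sub: "\<And>R' C'. R' \<subseteq> R \<Longrightarrow> C' \<subseteq> C \<Longrightarrow> (R', C') \<noteq> (R, C) \<Longrightarrow> gap_growth_le A \<delta> R' C' \<eta> T"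
  shows "gap R C U V s \<le> gap R C U V 0 + 2 * (\<delta> + 2 * a * (T + 1))
    \<or> gap R C U V s \<le> gap R C U V (s - T) + \<eta> * T + 2 * (\<delta> + 2 * a)"
proof -
  define R' where "R' = i ` {s - T..s}"
  define C' where "C' = j ` {s - T..s}"
  have "R' \<subseteq> R" "C' \<subseteq> C"
    unfolding R'_def C'_def using approx_play_mem[OF play] \<open>s \<le> N\<close> by auto
  show ?thesis
  proof (cases "(R', C') = (R, C)")
    case True
    then show ?thesis
      using gap_le_if_all_chosen[OF play A \<open>T < s\<close> \<open>s \<le> N\<close>] unfolding R'_def C'_def by auto
  next
    case False
    have "s - T + T \<le> N" using \<open>T < s\<close> \<open>s \<le> N\<close> by simp
    from approx_play_window[OF play this \<open>R' \<subseteq> R\<close> \<open>C' \<subseteq> C\<close>]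
    have "gap R' C' U V s \<le> gap R' C' U V (s - T) + \<eta> * T"
      using sub[OF \<open>R' \<subseteq> R\<close> \<open>C' \<subseteq> C\<close> False] \<open>T < s\<close>
      unfolding R'_def C'_def gap_growth_le_def gap_def by fastforce
    moreover have "i (Suc (s - 1)) \<in> R'" "j (Suc (s - 1)) \<in> C'"
      unfolding R'_def C'_def using \<open>T < s\<close> by auto
    then have "gap R C U V s \<le> gap R' C' U V s + 2 * (\<delta> + 2 * a)"
      using gap_le_subgame_gap[OF play A, of "s - 1"] \<open>T < s\<close> \<open>s \<le> N\<close> by simp
    moreover have "gap R' C' U V (s - T) \<le> gap R C U V (s - T)"
      by (rule gap_antimono[OF \<open>R' \<subseteq> R\<close> \<open>C' \<subseteq> C\<close>]) (auto simp: R'_def C'_def)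
    ultimately show ?thesis by simp
  qed
qed

lemma eventually_gap_growth_le_step:
  fixes A :: "'m::finite \<Rightarrow> 'n::finite \<Rightarrow> real"
  assumes A: "\<And>k l. \<bar>A k l\<bar> \<le> a" and "0 \<le> \<delta>" "0 < \<epsilon>"
    and sub: "\<And>R' C'. R' \<subseteq> R \<Longrightarrow> C' \<subseteq> C \<Longrightarrow> (R', C') \<noteq> (R, C) \<Longrightarrow>
      eventually (gap_growth_le A \<delta> R' C' (\<epsilon> / 4)) sequentially"
  shows "eventually (gap_growth_le A \<delta> R C \<epsilon>) sequentially"
proof -
  have "0 \<le> a" using A by (meson abs_ge_zero order_trans)
  have large: "\<forall>\<^sub>F n in sequentially. x \<le> real n" for x
    using filterlim_real_sequentially unfolding filterlim_at_top by blast
  let ?subgames = "{(R', C'). R' \<subseteq> R \<and> C' \<subseteq> C \<and> (R', C') \<noteq> (R, C)}"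
  have "\<forall>\<^sub>F T in sequentially. (\<forall>(R', C')\<in>?subgames. gap_growth_le A \<delta> R' C' (\<epsilon> / 4) T)"
    using sub by (intro eventually_ball_finite) auto
  moreover have "\<forall>\<^sub>F T in sequentially. 8 * (\<delta> + 2 * a) / \<epsilon> \<le> real T \<and> 0 < T"
    using large eventually_gt_at_top by (intro eventually_conj) auto
  ultimately have "\<forall>\<^sub>F T in sequentially. (\<forall>(R', C')\<in>?subgames. gap_growth_le A \<delta> R' C' (\<epsilon> / 4) T)
      \<and> 8 * (\<delta> + 2 * a) / \<epsilon> \<le> real T \<and> 0 < T"
    by (rule eventually_conj)
  then obtain T where subgames: "\<forall>(R', C')\<in>?subgames. gap_growth_le A \<delta> R' C' (\<epsilon> / 4) T"
    and "8 * (\<delta> + 2 * a) / \<epsilon> \<le> real T" "0 < T"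
    unfolding eventually_sequentially by blast
  then have switch_cost: "\<epsilon> / 4 * T + 2 * (\<delta> + 2 * a) \<le> \<epsilon> / 2 * T"
    using \<open>0 < \<epsilon>\<close> by (simp add: field_simps)
  define K where "K = 2 * (\<delta> + 2 * a * (T + 1))"
  have "gap_growth_le A \<delta> R C \<epsilon> N" if N: "2 * K / \<epsilon> \<le> real N" for N
    unfolding gap_growth_le_def
  proof (intro allI impI)
    fix U V i j assume play: "approx_play A \<delta> R C U V i j N"
    have "gap R C U V s \<le> gap R C U V 0 + K" if "s \<le> N" "s \<le> T" for s
    proof -
      have "2 * a * s \<le> 2 * a * (T + 1)" "0 \<le> 2 * a * (T + 1)"
        using \<open>0 \<le> a\<close> that(2) by (auto intro: mult_left_mono)
      then have "2 * a * s \<le> K" unfolding K_def using \<open>0 \<le> \<delta>\<close> by (simp add: algebra_simps)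
      then show ?thesis using gap_drift[OF play A \<open>s \<le> N\<close>] by simp
    qed
    moreover have "gap R C U V s \<le> gap R C U V 0 + K \<or> gap R C U V s \<le> gap R C U V (s - T) + \<epsilon> / 2 * T"
      if "s \<le> N" "T < s" for s
      using gap_window_step[OF play A \<open>T < s\<close> \<open>s \<le> N\<close>, of "\<epsilon> / 4"] subgames switch_cost
      unfolding K_def by auto
    ultimately have "gap R C U V N \<le> gap R C U V 0 + K + \<epsilon> / 2 * N"
      using bounded_by_window_recurrence[of T "\<epsilon> / 2" N "gap R C U V"] \<open>0 < T\<close> \<open>0 < \<epsilon>\<close> by auto
    moreover have "K \<le> \<epsilon> / 2 * N" using N \<open>0 < \<epsilon>\<close> by (simp add: field_simps)
    ultimately show "gap R C U V N \<le> gap R C U V 0 + \<epsilon> * N" by simp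
  qed
  then show ?thesis using large eventually_mono by blast
qed

lemma eventually_gap_growth_le:
  fixes A :: "'m::finite \<Rightarrow> 'n::finite \<Rightarrow> real"
  assumes A: "\<And>k l. \<bar>A k l\<bar> \<le> a" and "0 \<le> \<delta>" "0 < \<epsilon>"
  shows "eventually (gap_growth_le A \<delta> R C \<epsilon>) sequentially"
  using \<open>0 < \<epsilon>\<close>
proof (induction "card R + card C" arbitrary: R C \<epsilon> rule: less_induct)
  case less
  show ?case
  proof (rule eventually_gap_growth_le_step[OF A \<open>0 \<le> \<delta>\<close> \<open>0 < \<epsilon>\<close>])
    fix R' C' assume "R' \<subseteq> R" "C' \<subseteq> C" "(R', C') \<noteq> (R, C)"
    then have "card R' + card C' < card R + card C"
      by (metis add_le_less_mono add_less_le_mono card_mono finite psubset_card_mono psubsetI)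
    then show "eventually (gap_growth_le A \<delta> R' C' (\<epsilon> / 4)) sequentially"
      using less by simp
  qed
qed

lemma abs_entry_le_mabs: "\<bar>A $ k $ l\<bar> \<le> mabs A"
  unfolding mabs_def by (rule Max_ge) (auto intro: image_eqI[of _ _ "(k, l)"])

lemma PFP_system_approx_play:
  assumes "PFP_system A U V"
  obtains i j where "vmin (U 0) = vmax (V 0)"
    and "\<And>N. approx_play (\<lambda>k l. A $ k $ l) (2 * mabs A) UNIV UNIV (\<lambda>t l. U t $ l) (\<lambda>t k. V t $ k) i j N"
proof -
  obtain i j EV EU where play: "iterative_play_with A U V i j"
    and perturbed: "\<forall>t. (\<forall>k. \<bar>EV t $ k\<bar> < mabs A) \<and> (\<forall>k. \<bar>EU t $ k\<bar> < mabs A) \<and>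
      (\<forall>k. (V t + EV t) $ k \<le> (V t + EV t) $ i (Suc t)) \<and>
      (\<forall>k. (U t + EU t) $ j (Suc t) \<le> (U t + EU t) $ k)"
    using assms unfolding PFP_system_def by blast
  have "V t $ k \<le> V t $ i (Suc t) + 2 * mabs A" "- U t $ l \<le> - U t $ j (Suc t) + 2 * mabs A" for t k l
  proof -
    have "(V t + EV t) $ k \<le> (V t + EV t) $ i (Suc t)" "\<bar>EV t $ k\<bar> < mabs A" "\<bar>EV t $ i (Suc t)\<bar> < mabs A"
      and "(U t + EU t) $ j (Suc t) \<le> (U t + EU t) $ l" "\<bar>EU t $ l\<bar> < mabs A" "\<bar>EU t $ j (Suc t)\<bar> < mabs A"
      using perturbed by blast+
    then show "V t $ k \<le> V t $ i (Suc t) + 2 * mabs A" "- U t $ l \<le> - U t $ j (Suc t) + 2 * mabs A"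
      by (simp_all add: abs_less_iff)
  qed
  then have "near_argmax (2 * mabs A) UNIV (\<lambda>k. V t $ k) (i (Suc t))"
    and "near_argmax (2 * mabs A) UNIV (\<lambda>l. - U t $ l) (j (Suc t))" for t
    unfolding near_argmax_def by simp_all
  with play show ?thesis
    unfolding iterative_play_with_def by (intro that[of i j]) (simp_all add: approx_play_def row_def column_def)
qed

theorem lemma4:
  fixes A :: "real^'n^'m" and \<epsilon> :: real
  assumes "\<epsilon> > 0"
  shows "\<exists>t0::nat. \<forall>U V. PFP_system A U V \<longrightarrow>
           (\<forall>t\<ge>t0. vmax (V t) - vmin (U t) \<le> \<epsilon> * real t)"
proof -
  have "0 \<le> mabs A" by (rule order_trans[OF abs_ge_zero abs_entry_le_mabs])
  then have "\<forall>\<^sub>F t in sequentially. gap_growth_le (\<lambda>k l. A $ k $ l) (2 * mabs A) UNIV UNIV \<epsilon> t"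
    by (intro eventually_gap_growth_le[OF abs_entry_le_mabs _ assms]) simp
  then obtain t0 where t0: "\<And>t. t0 \<le> t \<Longrightarrow> gap_growth_le (\<lambda>k l. A $ k $ l) (2 * mabs A) UNIV UNIV \<epsilon> t"
    unfolding eventually_sequentially by blast
  have "vmax (V t) - vmin (U t) \<le> \<epsilon> * real t" if "PFP_system A U V" "t0 \<le> t" for U V t
  proof -
    obtain i j where "vmin (U 0) = vmax (V 0)"
      and "\<And>N. approx_play (\<lambda>k l. A $ k $ l) (2 * mabs A) UNIV UNIV (\<lambda>t l. U t $ l) (\<lambda>t k. V t $ k) i j N"
      using PFP_system_approx_play[OF \<open>PFP_system A U V\<close>] by blast
    then show ?thesis
      using t0[OF \<open>t0 \<le> t\<close>] unfolding gap_growth_le_def gap_def vmax_def vmin_def by fastforce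
  qed
  then show ?thesis by blast
qed

end
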